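(* Let $n\geq 1$. The classes $\alpha_{\mathcal D}=\frac{1}{|\mathrm{Stab}_{S_n}(\Delta_{\mathcal D})|}\sum_{\sigma\in S_n}\sigma(\mu_{\Delta_{\mathcal D}})\in H^{|E\mathcal D|}(\mathbb{Z}\mathcal{A}_n;\mathbb{Q})$, for $\mathcal D$ ranging over $\mathcal{D}_n$, form a basis over $\mathbb{Q}$ of $H^\bullet(\mathbb{Z}\mathcal{A}_n;\mathbb{Q})^{S_n}$.
   Context: $P_n$ is the pure braid group on $n$ strands and $\mathbb{Z}\mathcal{A}_n=P_n/[P_n,P_n]\cong\mathbb{Z}^{n(n-1)/2}$. $H^\bullet(\mathbb{Z}\mathcal{A}_n;\mathbb{Q})$ is the exterior algebra on classes $\omega_{ij}$, $1\le i<j\le n$, and the symmetric group $S_n$ acts on it by the algebra automorphisms with $\sigma(\omega_{ij})=\omega_{\sigma(i)\sigma(j)}$ if $\sigma(i)<\sigma(j)$ and $\omega_{\sigma(j)\sigma(i)}$ otherwise. Graphs are finite simple graphs; $K_n$ is the complete graph on $\{1,\dots,n\}$, and $S_n$ acts on subgraphs of $K_n$. For a subgraph $\Delta\subset K_n$ (vertex set $\{1,\dots,n\}$) with edges $(i_1,j_1),\dots,(i_k,j_k)$, $i_t<j_t$, listed lexicographically, $\mu_\Delta=\omega_{i_1j_1}\cdots\omega_{i_kj_k}$. A graph is invariant if every automorphism induces an even permutation of its edge set. $\mathcal{D}_n$ is the set of isomorphism classes of invariant graphs with exactly $n$ vertices (isolated vertices allowed); for each $\mathcal D\in\mathcal D_n$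 a representative $\Delta_{\mathcal D}\subset K_n$ is fixed, and $|E\mathcal D|$ is its number of edges. *)

theory Defs
  imports Complex_Main "HOL-Combinatorics.Permutations"
begin

text \<open>Vertices are 1..n. Edges of K_n are pairs (i,j) with 1 <= i < j <= n.
 A subgraph of K_n (on vertex set {1..n}) is a set of such edges.\<close>

definition Kn :: "nat \<Rightarrow> (nat \<times> nat) set" where
  "Kn n = {(i,j). 1 \<le> i \<and> i < j \<and> j \<le> n}"

definition perms :: "nat \<Rightarrow> (nat \<Rightarrow> nat) set" where
  "perms n = {\<sigma>. \<sigma> permutes {1..n}}"

definition eimg :: "(nat \<Rightarrow> nat) \<Rightarrow> nat \<times> nat \<Rightarrow> nat \<times> nat" where
  "eimg \<sigma> e = (min (\<sigma> (fst e)) (\<sigma> (snd e)), max (\<sigma> (fst e)) (\<sigma> (snd e)))"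

definition gimg :: "(nat \<Rightarrow> nat) \<Rightarrow> (nat \<times> nat) set \<Rightarrow> (nat \<times> nat) set" where
  "gimg \<sigma> \<Delta> = eimg \<sigma> ` \<Delta>"

definition lexless :: "nat \<times> nat \<Rightarrow> nat \<times> nat \<Rightarrow> bool" where
  "lexless e f \<longleftrightarrow> fst e < fst f \<or> (fst e = fst f \<and> snd e < snd f)"

definition Stab :: "nat \<Rightarrow> (nat \<times> nat) set \<Rightarrow> (nat \<Rightarrow> nat) set" where
  "Stab n \<Delta> = {\<sigma> \<in> perms n. gimg \<sigma> \<Delta> = \<Delta>}"

definition edge_perm :: "(nat \<Rightarrow> nat) \<Rightarrow> (nat \<times> nat) set \<Rightarrow> nat \<times> nat \<Rightarrow> nat \<times> nat" where
  "edge_perm \<sigma> \<Delta> = (\<lambda>e. if e \<in> \<Delta> then eimg \<sigma> e else e)"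

definition invariant_graph :: "nat \<Rightarrow> (nat \<times> nat) set \<Rightarrow> bool" where
  "invariant_graph n \<Delta> \<longleftrightarrow> (\<forall>\<sigma> \<in> Stab n \<Delta>. evenperm (edge_perm \<sigma> \<Delta>))"

text \<open>Isomorphism classes of graphs with exactly n vertices = S_n-orbits of subgraphs of K_n.\<close>
definition orbit :: "nat \<Rightarrow> (nat \<times> nat) set \<Rightarrow> (nat \<times> nat) set set" where
  "orbit n \<Delta> = {gimg \<sigma> \<Delta> | \<sigma>. \<sigma> \<in> perms n}"

definition Dclasses :: "nat \<Rightarrow> (nat \<times> nat) set set set" where
  "Dclasses n = {orbit n \<Delta> | \<Delta>. \<Delta> \<subseteq> Kn n \<and> invariant_graph n \<Delta>}"

text \<open>The exterior algebra H(ZA_n;Q) on the classes omega_ij: an element is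
 a rational function on edge sets supported on subsets of Kn n; the coefficient
 at Delta is the coefficient of the monomial mu_Delta.\<close>
definition Hcoh :: "nat \<Rightarrow> ((nat \<times> nat) set \<Rightarrow> rat) set" where
  "Hcoh n = {c. \<forall>\<Gamma>. \<not> \<Gamma> \<subseteq> Kn n \<longrightarrow> c \<Gamma> = 0}"

definition Hdeg :: "nat \<Rightarrow> nat \<Rightarrow> ((nat \<times> nat) set \<Rightarrow> rat) set" where
  "Hdeg n k = {c \<in> Hcoh n. \<forall>\<Gamma>. card \<Gamma> \<noteq> k \<longrightarrow> c \<Gamma> = 0}"

definition mono :: "(nat \<times> nat) set \<Rightarrow> (nat \<times> nat) set \<Rightarrow> rat" where
  "mono \<Delta> = (\<lambda>\<Gamma>. if \<Gamma> = \<Delta> then 1 else 0)"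

text \<open>sigma(mu_Delta) = omega_{sigma e_1} ... omega_{sigma e_k} = (-1)^inv mu_{sigma Delta},
 inv being the number of inversions of the reordering into lexicographic order.\<close>
definition act_sign :: "(nat \<Rightarrow> nat) \<Rightarrow> (nat \<times> nat) set \<Rightarrow> rat" where
  "act_sign \<sigma> \<Delta> = (-1) ^ card {(e,f). e \<in> \<Delta> \<and> f \<in> \<Delta> \<and> lexless e f \<and> lexless (eimg \<sigma> f) (eimg \<sigma> e)}"

definition act :: "nat \<Rightarrow> (nat \<Rightarrow> nat) \<Rightarrow> ((nat \<times> nat) set \<Rightarrow> rat) \<Rightarrow> ((nat \<times> nat) set \<Rightarrow> rat)" where
  "act n \<sigma> c = (\<lambda>\<Gamma>. \<Sum>\<Delta> \<in> {\<Delta>. \<Delta> \<subseteq> Kn n \<and> gimg \<sigma> \<Delta> = \<Gamma>}. act_sign \<sigma> \<Delta> * c \<Delta>)"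

definition Hinv :: "nat \<Rightarrow> ((nat \<times> nat) set \<Rightarrow> rat) set" where
  "Hinv n = {c \<in> Hcoh n. \<forall>\<sigma> \<in> perms n. act n \<sigma> c = c}"

definition alpha :: "nat \<Rightarrow> (nat \<times> nat) set \<Rightarrow> (nat \<times> nat) set \<Rightarrow> rat" where
  "alpha n \<Delta> = (\<lambda>\<Gamma>. (1 / of_nat (card (Stab n \<Delta>))) *
      (\<Sum>\<sigma> \<in> perms n. act n \<sigma> (mono \<Delta>) \<Gamma>))"

end

theory Submission
  imports Defs "HOL-Library.Product_Lexorder"
begin

(* A permutation sigma of the vertices maps the monomial mu_Delta to eps(sigma, Delta) mu_(sigma Delta),
   where eps(sigma, Delta) is the sign of the reordering of the edges of Delta into lexicographic
   order, i.e. the inversion sign of the induced edge map on Delta.  Inversion signs are cocycles,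
   which makes this an action, and for an automorphism rho of Delta the inversion sign is the sign
   of the edge permutation rho induces.  Hence an invariant class c satisfies
   c(sigma Delta) = eps(sigma, Delta) c(Delta), and c(Delta) = -c(Delta) whenever Delta is not
   invariant.  For invariant Delta the sign eps is constant on each coset of the stabiliser, so
   alpha_Delta is supported on the orbit of Delta with alpha_Delta(sigma Delta) = eps(sigma, Delta).
   The classes alpha of the representatives therefore have disjoint supports, and every invariant
   c equals the sum of c(Delta_D) alpha_(Delta_D). *)

section \<open>Inversion sign of a map between linear orders\<close>

definition increasing_pairs :: "'a::linorder set \<Rightarrow> ('a \<times> 'a) set" where
  "increasing_pairs S = {(x, y). x \<in> S \<and> y \<in> S \<and> x < y}"

definition inversion_sign :: "('a::linorder \<Rightarrow> 'b::linorder) \<Rightarrow> 'a set \<Rightarrow> int" where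
  "inversion_sign f S = (-1) ^ card {(x, y). x \<in> S \<and> y \<in> S \<and> x < y \<and> f y < f x}"

definition inversion_factor :: "('a::linorder \<Rightarrow> 'b::linorder) \<Rightarrow> 'a \<times> 'a \<Rightarrow> int" where
  "inversion_factor f = (\<lambda>(x, y). if f y < f x then -1 else 1)"

definition sorted_image_pair :: "('a \<Rightarrow> 'b::linorder) \<Rightarrow> 'a \<times> 'a \<Rightarrow> 'b \<times> 'b" where
  "sorted_image_pair \<rho> = (\<lambda>(x, y). (min (\<rho> x) (\<rho> y), max (\<rho> x) (\<rho> y)))"

lemma finite_increasing_pairs: "finite S \<Longrightarrow> finite (increasing_pairs S)"
  by (rule finite_subset[of _ "S \<times> S"]) (auto simp: increasing_pairs_def)

lemma inversion_sign_eq_prod: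
  assumes "finite S"
  shows "inversion_sign f S = (\<Prod>p\<in>increasing_pairs S. inversion_factor f p)"
proof -
  have "{(x, y). x \<in> S \<and> y \<in> S \<and> x < y \<and> f y < f x} = increasing_pairs S \<inter> {(x, y). f y < f x}"
    by (auto simp: increasing_pairs_def)
  then show ?thesis
    using finite_increasing_pairs[OF assms]
    by (simp add: inversion_sign_def inversion_factor_def case_prod_beta prod.If_cases Int_def)
qed

lemma inversion_sign_cong: "(\<And>x. x \<in> S \<Longrightarrow> f x = g x) \<Longrightarrow> inversion_sign f S = inversion_sign g S"
  unfolding inversion_sign_def by (rule arg_cong[where f = "\<lambda>A. (-1) ^ card A"]) auto

lemma inversion_sign_id [simp]: "inversion_sign id S = 1"
proof -
  have "{(x, y). x \<in> S \<and> y \<in> S \<and> x < y \<and> y < x} = {}"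
    by auto
  then show ?thesis
    by (simp only: inversion_sign_def id_apply card.empty power_0)
qed

lemma bij_betw_increasing_pairs_image:
  assumes "inj_on \<rho> S"
  shows "bij_betw (sorted_image_pair \<rho>) (increasing_pairs S) (increasing_pairs (\<rho> ` S))"
proof (rule bij_betwI')
  fix p q assume "p \<in> increasing_pairs S" "q \<in> increasing_pairs S"
  then obtain x y x' y' where "p = (x, y)" "q = (x', y')" "x \<in> S" "y \<in> S" "x < y"
    "x' \<in> S" "y' \<in> S" "x' < y'"
    by (auto simp: increasing_pairs_def)
  with assms show "(sorted_image_pair \<rho> p = sorted_image_pair \<rho> q) = (p = q)"
    by (auto simp: sorted_image_pair_def min_def max_def inj_on_eq_iff split: if_splits)
next
  fix p assume "p \<in> increasing_pairs S"
  then obtain x y where p: "p = (x, y)" "x \<in> S" "y \<in> S" "x < y"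
    by (auto simp: increasing_pairs_def)
  then have "\<rho> x \<noteq> \<rho> y"
    using assms by (metis inj_on_eq_iff less_irrefl)
  with p show "sorted_image_pair \<rho> p \<in> increasing_pairs (\<rho> ` S)"
    by (auto simp: increasing_pairs_def sorted_image_pair_def min_def max_def)
next
  fix q assume "q \<in> increasing_pairs (\<rho> ` S)"
  then obtain x y where q: "q = (\<rho> x, \<rho> y)" "x \<in> S" "y \<in> S" "\<rho> x < \<rho> y"
    by (auto simp: increasing_pairs_def)
  then consider "x < y" | "y < x"
    by (metis less_irrefl linorder_neqE)
  then show "\<exists>p\<in>increasing_pairs S. q = sorted_image_pair \<rho> p"
  proof cases
    case 1
    with q show ?thesis by (intro bexI[of _ "(x, y)"]) (auto simp: increasing_pairs_def sorted_image_pair_def)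
  next
    case 2
    with q show ?thesis by (intro bexI[of _ "(y, x)"]) (auto simp: increasing_pairs_def sorted_image_pair_def)
  qed
qed

lemma inversion_sign_comp:
  assumes fin: "finite S" and inj: "inj_on \<rho> S" "inj_on \<sigma> (\<rho> ` S)"
  shows "inversion_sign (\<sigma> \<circ> \<rho>) S = inversion_sign \<rho> S * inversion_sign \<sigma> (\<rho> ` S)"
proof -
  have factor: "inversion_factor (\<sigma> \<circ> \<rho>) p = inversion_factor \<rho> p * inversion_factor \<sigma> (sorted_image_pair \<rho> p)"
    if pS: "p \<in> increasing_pairs S" for p
  proof -
    obtain x y where p: "p = (x, y)" "x \<in> S" "y \<in> S" "x < y"
      using pS by (auto simp: increasing_pairs_def)
    then have "\<rho> x \<noteq> \<rho> y"
      using inj(1) by (metis inj_on_eq_iff less_irrefl)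
    moreover have "\<sigma> (\<rho> x) \<noteq> \<sigma> (\<rho> y)"
      using p inj calculation by (metis image_eqI inj_on_eq_iff)
    ultimately show ?thesis
      using p by (cases "\<rho> x < \<rho> y") (auto simp: inversion_factor_def sorted_image_pair_def min_def max_def)
  qed
  have "inversion_sign (\<sigma> \<circ> \<rho>) S
      = inversion_sign \<rho> S * (\<Prod>p\<in>increasing_pairs S. inversion_factor \<sigma> (sorted_image_pair \<rho> p))"
    using factor by (simp add: inversion_sign_eq_prod[OF fin] prod.distrib)
  also have "(\<Prod>p\<in>increasing_pairs S. inversion_factor \<sigma> (sorted_image_pair \<rho> p))
      = (\<Prod>q\<in>increasing_pairs (\<rho> ` S). inversion_factor \<sigma> q)"
    by (rule prod.reindex_bij_betw[OF bij_betw_increasing_pairs_image[OF inj(1)]])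
  also have "\<dots> = inversion_sign \<sigma> (\<rho> ` S)"
    by (simp add: inversion_sign_eq_prod[OF finite_imageI[OF fin]])
  finally show ?thesis .
qed

(* The inversions of the transposition of a < b are (a, b) and the pairs (a, c), (c, b) with
   a < c < b: an odd number. *)

lemma inversion_sign_transpose:
  assumes "finite S" "a \<in> S" "b \<in> S" "a < b"
  shows "inversion_sign (transpose a b) S = -1"
proof -
  define M where "M = {c \<in> S. a < c \<and> c < b}"
  have "{(x, y). x \<in> S \<and> y \<in> S \<and> x < y \<and> transpose a b y < transpose a b x}
      = {(a, b)} \<union> ({a} \<times> M \<union> M \<times> {b})"
  proof (rule set_eqI, clarify)
    fix x y
    show "((x, y) \<in> {(x, y). x \<in> S \<and> y \<in> S \<and> x < y \<and> transpose a b y < transpose a b x})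
        = ((x, y) \<in> {(a, b)} \<union> ({a} \<times> M \<union> M \<times> {b}))"
      using assms by (auto simp: M_def transpose_def)
  qed
  moreover have "finite M" "{a} \<times> M \<inter> M \<times> {b} = {}" "(a, b) \<notin> {a} \<times> M \<union> M \<times> {b}"
    using assms by (auto simp: M_def)
  then have "card ({(a, b)} \<union> ({a} \<times> M \<union> M \<times> {b})) = Suc (card M + card M)"
    by (simp add: card_Un_disjoint card_cartesian_product_singleton)
  ultimately show ?thesis
    by (simp add: inversion_sign_def)
qed

lemma inversion_sign_eq_sign:
  assumes "p permutes S" "finite S"
  shows "inversion_sign p S = sign p"
  using assms
proof (induction rule: permutes_induct)
  case id
  show ?case
    using inversion_sign_id by (simp add: id_def)
next
  case (swap a b p)
  have "inversion_sign (transpose a b) S = -1"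
    using swap(1-3) inversion_sign_transpose[OF assms(2)] transpose_commute
    by (metis linorder_neqE)
  moreover have "inversion_sign (transpose a b \<circ> p) S = inversion_sign p S * inversion_sign (transpose a b) S"
    using inversion_sign_comp[OF assms(2) permutes_inj_on[OF swap(4)], of "transpose a b"]
    by (simp add: permutes_image[OF swap(4)] inj_on_subset[OF inj_transpose])
  ultimately show ?case
    using swap(3) swap.IH sign_compose[OF permutation_swap_id permutes_imp_permutation[OF assms(2) swap(4)]]
    by (simp add: sign_swap_id comp_def)
qed

section \<open>Vertex permutations acting on edges, graphs and monomials\<close>

lemma perms_id: "id \<in> perms n"
  by (simp add: perms_def permutes_id)

lemma perms_comp: "\<sigma> \<in> perms n \<Longrightarrow> \<tau> \<in> perms n \<Longrightarrow> \<tau> \<circ> \<sigma> \<in> perms n"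
  by (simp add: perms_def permutes_compose)

lemma perms_inv: "\<sigma> \<in> perms n \<Longrightarrow> inv \<sigma> \<in> perms n"
  by (simp add: perms_def permutes_inv)

lemma perms_inv_comp: "\<sigma> \<in> perms n \<Longrightarrow> inv \<sigma> \<circ> \<sigma> = id \<and> \<sigma> \<circ> inv \<sigma> = id"
  by (simp add: perms_def permutes_inv_o)

lemma finite_perms: "finite (perms n)"
  by (simp add: perms_def finite_permutations)

lemma bij_betw_comp_left_perms: "\<tau> \<in> perms n \<Longrightarrow> bij_betw ((\<circ>) \<tau>) (perms n) (perms n)"
  by (rule bij_betwI[where g = "(\<circ>) (inv \<tau>)"])
     (auto simp: perms_comp perms_inv o_assoc perms_inv_comp)

lemma finite_Kn: "finite (Kn n)"
  by (rule finite_subset[of _ "{1..n} \<times> {1..n}"]) (auto simp: Kn_def)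

lemma eimg_comp: "eimg (\<tau> \<circ> \<sigma>) = eimg \<tau> \<circ> eimg \<sigma>"
proof
  fix e
  show "eimg (\<tau> \<circ> \<sigma>) e = (eimg \<tau> \<circ> eimg \<sigma>) e"
    by (cases "\<sigma> (fst e) \<le> \<sigma> (snd e)") (auto simp: eimg_def min_def max_def)
qed

lemma eimg_id: "e \<in> Kn n \<Longrightarrow> eimg id e = e"
  by (auto simp: eimg_def Kn_def)

lemma perms_in_vertices: "\<sigma> \<in> perms n \<Longrightarrow> i \<in> {1..n} \<Longrightarrow> \<sigma> i \<in> {1..n}"
  by (metis mem_Collect_eq perms_def permutes_in_image)

lemma eimg_in_Kn:
  assumes "\<sigma> \<in> perms n" "e \<in> Kn n"
  shows "eimg \<sigma> e \<in> Kn n"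
proof -
  obtain i j where e: "e = (i, j)" "i \<in> {1..n}" "j \<in> {1..n}" "i < j"
    using assms(2) by (auto simp: Kn_def)
  have "\<sigma> i \<in> {1..n}" "\<sigma> j \<in> {1..n}"
    using e perms_in_vertices[OF assms(1)] by blast+
  moreover have "\<sigma> i \<noteq> \<sigma> j"
    using assms(1) e(4) by (auto simp: perms_def dest: permutes_inj injD)
  ultimately show ?thesis
    using e by (auto simp: eimg_def Kn_def min_def max_def)
qed

lemma eimg_inv_eimg: "\<sigma> \<in> perms n \<Longrightarrow> e \<in> Kn n \<Longrightarrow> eimg (inv \<sigma>) (eimg \<sigma> e) = e"
  by (metis comp_apply eimg_comp eimg_id perms_inv_comp)

lemma inj_on_eimg: "\<sigma> \<in> perms n \<Longrightarrow> inj_on (eimg \<sigma>) (Kn n)"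
  by (metis eimg_inv_eimg inj_onI)

lemma gimg_comp: "gimg (\<tau> \<circ> \<sigma>) \<Delta> = gimg \<tau> (gimg \<sigma> \<Delta>)"
  by (simp add: gimg_def eimg_comp image_comp)

lemma gimg_subset_Kn: "\<sigma> \<in> perms n \<Longrightarrow> \<Delta> \<subseteq> Kn n \<Longrightarrow> gimg \<sigma> \<Delta> \<subseteq> Kn n"
  by (auto simp: gimg_def eimg_in_Kn)

lemma gimg_id: "\<Delta> \<subseteq> Kn n \<Longrightarrow> gimg id \<Delta> = \<Delta>"
  by (force simp: gimg_def eimg_id)

lemma gimg_inv_gimg: "\<sigma> \<in> perms n \<Longrightarrow> \<Delta> \<subseteq> Kn n \<Longrightarrow> gimg (inv \<sigma>) (gimg \<sigma> \<Delta>) = \<Delta>"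
  by (metis gimg_comp gimg_id perms_inv_comp)

lemma gimg_gimg_inv: "\<sigma> \<in> perms n \<Longrightarrow> \<Delta> \<subseteq> Kn n \<Longrightarrow> gimg \<sigma> (gimg (inv \<sigma>) \<Delta>) = \<Delta>"
  by (metis gimg_comp gimg_id perms_inv_comp)

lemma card_gimg: "\<sigma> \<in> perms n \<Longrightarrow> \<Delta> \<subseteq> Kn n \<Longrightarrow> card (gimg \<sigma> \<Delta>) = card \<Delta>"
  unfolding gimg_def by (meson card_image inj_on_eimg inj_on_subset)

lemma act_sign_eq_inversion_sign: "act_sign \<sigma> \<Delta> = of_int (inversion_sign (eimg \<sigma>) \<Delta>)"
proof -
  have "lexless = (<)"
    by (auto simp: fun_eq_iff lexless_def less_prod_def)
  then show ?thesis
    unfolding act_sign_def inversion_sign_def by (simp only: of_int_power of_int_minus of_int_1)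
qed

lemma act_sign_nonzero: "act_sign \<sigma> \<Delta> \<noteq> 0"
  by (simp add: act_sign_def)

lemma act_sign_id:
  assumes "\<Delta> \<subseteq> Kn n"
  shows "act_sign id \<Delta> = 1"
proof -
  have "inversion_sign (eimg id) \<Delta> = inversion_sign id \<Delta>"
    using assms by (intro inversion_sign_cong) (auto simp: eimg_id)
  then show ?thesis
    by (simp add: act_sign_eq_inversion_sign)
qed

lemma act_sign_comp:
  assumes "\<sigma> \<in> perms n" "\<tau> \<in> perms n" "\<Delta> \<subseteq> Kn n"
  shows "act_sign (\<tau> \<circ> \<sigma>) \<Delta> = act_sign \<sigma> \<Delta> * act_sign \<tau> (gimg \<sigma> \<Delta>)"
proof -
  have "finite \<Delta>"
    using assms(3) finite_Kn finite_subset by blast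
  moreover have "inj_on (eimg \<sigma>) \<Delta>" "inj_on (eimg \<tau>) (eimg \<sigma> ` \<Delta>)"
    using assms gimg_subset_Kn[OF assms(1,3)]
    by (auto simp: gimg_def intro: inj_on_subset[OF inj_on_eimg])
  ultimately show ?thesis
    unfolding act_sign_eq_inversion_sign eimg_comp gimg_def
    by (simp only: inversion_sign_comp of_int_mult)
qed

lemma act_gimg:
  assumes "\<sigma> \<in> perms n" "\<Delta> \<subseteq> Kn n"
  shows "act n \<sigma> c (gimg \<sigma> \<Delta>) = act_sign \<sigma> \<Delta> * c \<Delta>"
proof -
  have "{\<Delta>'. \<Delta>' \<subseteq> Kn n \<and> gimg \<sigma> \<Delta>' = gimg \<sigma> \<Delta>} = {\<Delta>}"
    using assms by (auto, metis gimg_inv_gimg, metis gimg_inv_gimg)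
  then show ?thesis
    by (simp add: act_def)
qed

lemma act_outside_Kn:
  assumes "\<sigma> \<in> perms n" "\<not> \<Gamma> \<subseteq> Kn n"
  shows "act n \<sigma> c \<Gamma> = 0"
proof -
  have "{\<Delta>. \<Delta> \<subseteq> Kn n \<and> gimg \<sigma> \<Delta> = \<Gamma>} = {}"
    using assms gimg_subset_Kn by blast
  then show ?thesis
    unfolding act_def by (simp only: sum.empty)
qed

lemma act_comp:
  assumes "\<sigma> \<in> perms n" "\<tau> \<in> perms n"
  shows "act n \<tau> (act n \<sigma> c) = act n (\<tau> \<circ> \<sigma>) c"
proof
  fix \<Gamma>
  show "act n \<tau> (act n \<sigma> c) \<Gamma> = act n (\<tau> \<circ> \<sigma>) c \<Gamma>"
  proof (cases "\<Gamma> \<subseteq> Kn n")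
    case True
    define \<Delta> where "\<Delta> = gimg (inv (\<tau> \<circ> \<sigma>)) \<Gamma>"
    have \<tau>\<sigma>: "\<tau> \<circ> \<sigma> \<in> perms n"
      using assms by (rule perms_comp)
    have \<Delta>_Kn: "\<Delta> \<subseteq> Kn n"
      using True \<tau>\<sigma> by (simp add: \<Delta>_def gimg_subset_Kn perms_inv)
    have \<Gamma>_eq: "\<Gamma> = gimg \<tau> (gimg \<sigma> \<Delta>)"
      using gimg_gimg_inv[OF \<tau>\<sigma> True] unfolding \<Delta>_def gimg_comp by simp
    have "act n \<tau> (act n \<sigma> c) \<Gamma> = act_sign \<tau> (gimg \<sigma> \<Delta>) * (act_sign \<sigma> \<Delta> * c \<Delta>)"
      using \<Delta>_Kn \<Gamma>_eq assms by (simp add: act_gimg gimg_subset_Kn)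
    also have "\<dots> = act_sign (\<tau> \<circ> \<sigma>) \<Delta> * c \<Delta>"
      using act_sign_comp[OF assms \<Delta>_Kn] by simp
    also have "\<dots> = act n (\<tau> \<circ> \<sigma>) c \<Gamma>"
      using act_gimg[OF \<tau>\<sigma> \<Delta>_Kn] \<Gamma>_eq by (simp add: gimg_comp)
    finally show ?thesis .
  next
    case False
    then show ?thesis
      using assms by (simp add: act_outside_Kn perms_comp)
  qed
qed

lemma act_scaled_sum:
  "act n \<tau> (\<lambda>\<Gamma>. k * (\<Sum>\<sigma>\<in>A. f \<sigma> \<Gamma>)) \<Gamma> = k * (\<Sum>\<sigma>\<in>A. act n \<tau> (f \<sigma>) \<Gamma>)"
proof -
  have "act n \<tau> (\<lambda>\<Gamma>. k * (\<Sum>\<sigma>\<in>A. f \<sigma> \<Gamma>)) \<Gamma>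
     = (\<Sum>\<Delta>\<in>{\<Delta>. \<Delta> \<subseteq> Kn n \<and> gimg \<tau> \<Delta> = \<Gamma>}. \<Sum>\<sigma>\<in>A. k * (act_sign \<tau> \<Delta> * f \<sigma> \<Delta>))"
    unfolding act_def by (simp add: sum_distrib_left mult.left_commute)
  also have "\<dots> = (\<Sum>\<sigma>\<in>A. \<Sum>\<Delta>\<in>{\<Delta>. \<Delta> \<subseteq> Kn n \<and> gimg \<tau> \<Delta> = \<Gamma>}. k * (act_sign \<tau> \<Delta> * f \<sigma> \<Delta>))"
    by (rule sum.swap)
  also have "\<dots> = k * (\<Sum>\<sigma>\<in>A. act n \<tau> (f \<sigma>) \<Gamma>)"
    unfolding act_def by (simp add: sum_distrib_left)
  finally show ?thesis .
qed

lemma act_monomial: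
  assumes "\<Delta> \<subseteq> Kn n"
  shows "act n \<sigma> (mono \<Delta>) \<Gamma> = (if gimg \<sigma> \<Delta> = \<Gamma> then act_sign \<sigma> \<Delta> else 0)"
proof -
  have "finite {\<Delta>'. \<Delta>' \<subseteq> Kn n \<and> gimg \<sigma> \<Delta>' = \<Gamma>}"
    by (rule finite_subset[of _ "Pow (Kn n)"]) (auto simp: finite_Kn)
  moreover have "act n \<sigma> (mono \<Delta>) \<Gamma>
      = (\<Sum>\<Delta>'\<in>{\<Delta>'. \<Delta>' \<subseteq> Kn n \<and> gimg \<sigma> \<Delta>' = \<Gamma>}. if \<Delta>' = \<Delta> then act_sign \<sigma> \<Delta>' else 0)"
    unfolding act_def mono_def by (intro sum.cong) auto
  ultimately show ?thesis
    using assms by auto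
qed

lemma Hinv_gimg:
  assumes "c \<in> Hinv n" "\<sigma> \<in> perms n" "\<Delta> \<subseteq> Kn n"
  shows "c (gimg \<sigma> \<Delta>) = act_sign \<sigma> \<Delta> * c \<Delta>"
proof -
  have "act n \<sigma> c = c"
    using assms(1,2) by (simp add: Hinv_def)
  with act_gimg[OF assms(2,3), of c] show ?thesis
    by simp
qed

section \<open>Invariant graphs and their orbits\<close>

lemma act_sign_Stab:
  assumes "\<rho> \<in> Stab n \<Delta>" "\<Delta> \<subseteq> Kn n"
  shows "act_sign \<rho> \<Delta> = of_int (sign (edge_perm \<rho> \<Delta>))"
proof -
  have \<rho>: "\<rho> \<in> perms n" "gimg \<rho> \<Delta> = \<Delta>"
    using assms(1) by (auto simp: Stab_def)
  have "bij_betw (eimg \<rho>) \<Delta> \<Delta>"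
    using \<rho> assms(2) by (auto simp: bij_betw_def gimg_def intro: inj_on_subset[OF inj_on_eimg])
  then have "bij_betw (edge_perm \<rho> \<Delta>) \<Delta> \<Delta>"
    by (rule bij_betw_cong[THEN iffD1, rotated]) (simp add: edge_perm_def)
  then have "edge_perm \<rho> \<Delta> permutes \<Delta>"
    by (rule bij_imp_permutes) (simp add: edge_perm_def)
  moreover have "finite \<Delta>"
    using assms(2) finite_Kn finite_subset by blast
  moreover have "inversion_sign (eimg \<rho>) \<Delta> = inversion_sign (edge_perm \<rho> \<Delta>) \<Delta>"
    by (rule inversion_sign_cong) (simp add: edge_perm_def)
  ultimately show ?thesis
    by (simp add: act_sign_eq_inversion_sign inversion_sign_eq_sign)
qed

lemma invariant_graph_iff_act_sign:
  "\<Delta> \<subseteq> Kn n \<Longrightarrow> invariant_graph n \<Delta> \<longleftrightarrow> (\<forall>\<rho> \<in> Stab n \<Delta>. act_sign \<rho> \<Delta> = 1)"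
  by (auto simp: invariant_graph_def act_sign_Stab sign_def)

lemma act_sign_eq_if_gimg_eq:
  assumes "\<Delta> \<subseteq> Kn n" "invariant_graph n \<Delta>" "\<sigma> \<in> perms n" "\<sigma>' \<in> perms n"
    and "gimg \<sigma>' \<Delta> = gimg \<sigma> \<Delta>"
  shows "act_sign \<sigma>' \<Delta> = act_sign \<sigma> \<Delta>"
proof -
  define \<rho> where "\<rho> = inv \<sigma> \<circ> \<sigma>'"
  have \<rho>: "\<rho> \<in> perms n"
    unfolding \<rho>_def using assms(3,4) by (simp add: perms_comp perms_inv)
  have "gimg \<rho> \<Delta> = \<Delta>"
    unfolding \<rho>_def gimg_comp assms(5) using assms(3,1) by (rule gimg_inv_gimg)
  with \<rho> assms(1,2) have "act_sign \<rho> \<Delta> = 1"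
    by (simp add: invariant_graph_iff_act_sign Stab_def)
  moreover have "\<sigma>' = \<sigma> \<circ> \<rho>"
    unfolding \<rho>_def using perms_inv_comp[OF assms(3)] by (simp add: o_assoc)
  ultimately show ?thesis
    using act_sign_comp[OF \<rho> assms(3,1)] \<open>gimg \<rho> \<Delta> = \<Delta>\<close> by simp
qed

lemma invariant_graph_gimg:
  assumes "\<Delta> \<subseteq> Kn n" "invariant_graph n \<Delta>" "\<sigma> \<in> perms n"
  shows "invariant_graph n (gimg \<sigma> \<Delta>)"
proof -
  have "act_sign \<rho> (gimg \<sigma> \<Delta>) = 1" if "\<rho> \<in> Stab n (gimg \<sigma> \<Delta>)" for \<rho>
  proof -
    have \<rho>: "\<rho> \<in> perms n" "gimg (\<rho> \<circ> \<sigma>) \<Delta> = gimg \<sigma> \<Delta>"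
      using that by (auto simp: Stab_def gimg_comp)
    then have "act_sign \<sigma> \<Delta> * act_sign \<rho> (gimg \<sigma> \<Delta>) = act_sign \<sigma> \<Delta>"
      using assms act_sign_comp[OF assms(3) \<rho>(1) assms(1)]
        act_sign_eq_if_gimg_eq[OF assms perms_comp[OF assms(3) \<rho>(1)]] by simp
    then show ?thesis
      using act_sign_nonzero by simp
  qed
  then show ?thesis
    using assms by (simp add: invariant_graph_iff_act_sign gimg_subset_Kn)
qed

lemma Hinv_vanishes_outside_invariant_graphs:
  assumes "c \<in> Hinv n" "\<not> (\<Gamma> \<subseteq> Kn n \<and> invariant_graph n \<Gamma>)"
  shows "c \<Gamma> = 0"
proof (cases "\<Gamma> \<subseteq> Kn n")
  case True
  with assms(2) obtain \<rho> where \<rho>: "\<rho> \<in> Stab n \<Gamma>" "\<not> evenperm (edge_perm \<rho> \<Gamma>)"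
    by (auto simp: invariant_graph_def)
  then have "act_sign \<rho> \<Gamma> = -1"
    using True by (simp add: act_sign_Stab sign_def)
  moreover have "\<rho> \<in> perms n" "gimg \<rho> \<Gamma> = \<Gamma>"
    using \<rho>(1) by (auto simp: Stab_def)
  ultimately have "c \<Gamma> = - c \<Gamma>"
    using Hinv_gimg[OF assms(1) _ True, of \<rho>] by simp
  then show ?thesis
    by simp
next
  case False
  with assms(1) show ?thesis
    by (simp add: Hinv_def Hcoh_def)
qed

lemma mem_orbit_iff: "\<Gamma> \<in> orbit n \<Delta> \<longleftrightarrow> (\<exists>\<sigma> \<in> perms n. \<Gamma> = gimg \<sigma> \<Delta>)"
  by (auto simp: orbit_def)

lemma self_in_orbit: "\<Delta> \<subseteq> Kn n \<Longrightarrow> \<Delta> \<in> orbit n \<Delta>"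
  using perms_id gimg_id by (metis mem_orbit_iff)

lemma orbit_subset_Kn: "\<Delta> \<subseteq> Kn n \<Longrightarrow> \<Gamma> \<in> orbit n \<Delta> \<Longrightarrow> \<Gamma> \<subseteq> Kn n"
  unfolding mem_orbit_iff using gimg_subset_Kn by blast

lemma orbit_eq:
  assumes "\<Delta> \<subseteq> Kn n" "\<Gamma> \<in> orbit n \<Delta>"
  shows "orbit n \<Gamma> = orbit n \<Delta>"
proof -
  obtain \<sigma> where \<sigma>: "\<sigma> \<in> perms n" "\<Gamma> = gimg \<sigma> \<Delta>"
    using assms(2) by (auto simp: mem_orbit_iff)
  have "gimg \<tau> \<Gamma> \<in> orbit n \<Delta>" if "\<tau> \<in> perms n" for \<tau>
    using \<sigma> that by (metis gimg_comp mem_orbit_iff perms_comp)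
  moreover have "gimg \<tau> \<Delta> \<in> orbit n \<Gamma>" if "\<tau> \<in> perms n" for \<tau>
  proof -
    have "gimg \<tau> \<Delta> = gimg (\<tau> \<circ> inv \<sigma>) \<Gamma>"
      using \<sigma> assms(1) by (simp add: gimg_comp gimg_inv_gimg)
    then show ?thesis
      using \<sigma>(1) that by (auto simp: mem_orbit_iff perms_comp perms_inv)
  qed
  ultimately show ?thesis
    by (auto simp: mem_orbit_iff)
qed

lemma Dclasses_memD:
  assumes "D \<in> Dclasses n" "\<Gamma> \<in> D"
  shows "\<Gamma> \<subseteq> Kn n" "invariant_graph n \<Gamma>" "D = orbit n \<Gamma>"
proof -
  obtain \<Delta> where \<Delta>: "D = orbit n \<Delta>" "\<Delta> \<subseteq> Kn n" "invariant_graph n \<Delta>"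
    using assms(1) by (auto simp: Dclasses_def)
  moreover obtain \<sigma> where "\<sigma> \<in> perms n" "\<Gamma> = gimg \<sigma> \<Delta>"
    using assms(2) \<Delta>(1) by (auto simp: mem_orbit_iff)
  ultimately show "\<Gamma> \<subseteq> Kn n" "invariant_graph n \<Gamma>"
    by (simp_all add: gimg_subset_Kn invariant_graph_gimg)
  show "D = orbit n \<Gamma>"
    using \<Delta>(1,2) assms(2) orbit_eq by blast
qed

lemma Dclasses_containing:
  "{D \<in> Dclasses n. \<Gamma> \<in> D} = (if \<Gamma> \<subseteq> Kn n \<and> invariant_graph n \<Gamma> then {orbit n \<Gamma>} else {})"
proof (cases "\<Gamma> \<subseteq> Kn n \<and> invariant_graph n \<Gamma>")
  case True
  then have "orbit n \<Gamma> \<in> Dclasses n" "\<Gamma> \<in> orbit n \<Gamma>"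
    by (auto simp: Dclasses_def self_in_orbit)
  then have "{D \<in> Dclasses n. \<Gamma> \<in> D} = {orbit n \<Gamma>}"
    using Dclasses_memD(3) by blast
  then show ?thesis
    unfolding if_P[OF True] .
next
  case False
  then have "{D \<in> Dclasses n. \<Gamma> \<in> D} = {}"
    using Dclasses_memD(1,2) by blast
  then show ?thesis
    unfolding if_not_P[OF False] .
qed

lemma finite_Dclasses: "finite (Dclasses n)"
proof (rule finite_subset)
  show "Dclasses n \<subseteq> Pow (Pow (Kn n))"
    unfolding Dclasses_def using orbit_subset_Kn by blast
qed (simp add: finite_Kn)

section \<open>The classes alpha\<close>

lemma alpha_eq_coset_sum:
  assumes "\<Delta> \<subseteq> Kn n"
  shows "alpha n \<Delta> \<Gamma> = (\<Sum>\<sigma> \<in> {\<sigma> \<in> perms n. gimg \<sigma> \<Delta> = \<Gamma>}. act_sign \<sigma> \<Delta>) / of_nat (card (Stab n \<Delta>))"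
  using assms finite_perms by (simp add: alpha_def act_monomial sum.inter_filter)

lemma alpha_outside_orbit:
  assumes "\<Delta> \<subseteq> Kn n" "\<Gamma> \<notin> orbit n \<Delta>"
  shows "alpha n \<Delta> \<Gamma> = 0"
proof -
  have no_coset: "{\<sigma> \<in> perms n. gimg \<sigma> \<Delta> = \<Gamma>} = {}"
    using assms(2) by (auto simp: mem_orbit_iff)
  show ?thesis
    unfolding alpha_eq_coset_sum[OF assms(1)] no_coset by simp
qed

lemma card_coset_Stab:
  assumes "\<sigma>\<^sub>0 \<in> perms n" "\<Delta> \<subseteq> Kn n"
  shows "card {\<sigma> \<in> perms n. gimg \<sigma> \<Delta> = gimg \<sigma>\<^sub>0 \<Delta>} = card (Stab n \<Delta>)"
proof -
  have "bij_betw ((\<circ>) \<sigma>\<^sub>0) (Stab n \<Delta>) {\<sigma> \<in> perms n. gimg \<sigma> \<Delta> = gimg \<sigma>\<^sub>0 \<Delta>}"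
  proof (rule bij_betwI[where g = "(\<circ>) (inv \<sigma>\<^sub>0)"])
    show "(\<circ>) \<sigma>\<^sub>0 \<in> Stab n \<Delta> \<rightarrow> {\<sigma> \<in> perms n. gimg \<sigma> \<Delta> = gimg \<sigma>\<^sub>0 \<Delta>}"
      using assms(1) by (auto simp: Stab_def gimg_comp perms_comp)
    show "(\<circ>) (inv \<sigma>\<^sub>0) \<in> {\<sigma> \<in> perms n. gimg \<sigma> \<Delta> = gimg \<sigma>\<^sub>0 \<Delta>} \<rightarrow> Stab n \<Delta>"
      using assms by (auto simp: Stab_def gimg_comp perms_comp perms_inv gimg_inv_gimg)
  qed (use perms_inv_comp[OF assms(1)] in \<open>simp_all add: o_assoc\<close>)
  then show ?thesis
    by (simp add: bij_betw_same_card)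
qed

lemma card_Stab_pos:
  assumes "\<Delta> \<subseteq> Kn n"
  shows "card (Stab n \<Delta>) > 0"
proof -
  have "id \<in> Stab n \<Delta>"
    using assms by (simp add: Stab_def perms_id gimg_id)
  moreover have "finite (Stab n \<Delta>)"
    using finite_perms by (rule finite_subset[rotated]) (auto simp: Stab_def)
  ultimately show ?thesis
    by (auto simp: card_gt_0_iff)
qed

lemma alpha_gimg:
  assumes "\<Delta> \<subseteq> Kn n" "invariant_graph n \<Delta>" "\<sigma>\<^sub>0 \<in> perms n"
  shows "alpha n \<Delta> (gimg \<sigma>\<^sub>0 \<Delta>) = act_sign \<sigma>\<^sub>0 \<Delta>"
proof -
  have "(\<Sum>\<sigma> \<in> {\<sigma> \<in> perms n. gimg \<sigma> \<Delta> = gimg \<sigma>\<^sub>0 \<Delta>}. act_sign \<sigma> \<Delta>)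
      = (\<Sum>\<sigma> \<in> {\<sigma> \<in> perms n. gimg \<sigma> \<Delta> = gimg \<sigma>\<^sub>0 \<Delta>}. act_sign \<sigma>\<^sub>0 \<Delta>)"
    by (rule sum.cong) (auto intro: act_sign_eq_if_gimg_eq[OF assms])
  also have "\<dots> = of_nat (card (Stab n \<Delta>)) * act_sign \<sigma>\<^sub>0 \<Delta>"
    by (simp add: card_coset_Stab[OF assms(3,1)])
  finally show ?thesis
    using card_Stab_pos[OF assms(1)] by (simp add: alpha_eq_coset_sum[OF assms(1)])
qed

lemma alpha_in_Hinv:
  assumes "\<Delta> \<subseteq> Kn n"
  shows "alpha n \<Delta> \<in> Hinv n"
proof -
  have "alpha n \<Delta> \<in> Hcoh n"
    by (simp add: Hcoh_def alpha_def act_outside_Kn)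
  moreover have "act n \<tau> (alpha n \<Delta>) = alpha n \<Delta>" if \<tau>: "\<tau> \<in> perms n" for \<tau>
  proof
    fix \<Gamma>
    have "act n \<tau> (alpha n \<Delta>) \<Gamma>
        = 1 / of_nat (card (Stab n \<Delta>)) * (\<Sum>\<sigma> \<in> perms n. act n \<tau> (act n \<sigma> (mono \<Delta>)) \<Gamma>)"
      unfolding alpha_def by (rule act_scaled_sum)
    also have "(\<Sum>\<sigma> \<in> perms n. act n \<tau> (act n \<sigma> (mono \<Delta>)) \<Gamma>)
        = (\<Sum>\<sigma> \<in> perms n. act n (\<tau> \<circ> \<sigma>) (mono \<Delta>) \<Gamma>)"
      using \<tau> by (simp add: act_comp)
    also have "(\<Sum>\<sigma> \<in> perms n. act n (\<tau> \<circ> \<sigma>) (mono \<Delta>) \<Gamma>) = (\<Sum>\<sigma> \<in> perms n. act n \<sigma> (mono \<Delta>) \<Gamma>)"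
      by (rule sum.reindex_bij_betw[OF bij_betw_comp_left_perms[OF \<tau>], of "\<lambda>\<sigma>. act n \<sigma> (mono \<Delta>) \<Gamma>"])
    finally show "act n \<tau> (alpha n \<Delta>) \<Gamma> = alpha n \<Delta> \<Gamma>"
      unfolding alpha_def .
  qed
  ultimately show ?thesis
    by (simp add: Hinv_def)
qed

lemma alpha_in_Hdeg:
  assumes "\<Delta> \<subseteq> Kn n"
  shows "alpha n \<Delta> \<in> Hdeg n (card \<Delta>)"
proof -
  have "card \<Gamma> = card \<Delta>" if "\<Gamma> \<in> orbit n \<Delta>" for \<Gamma>
    using that assms by (auto simp: mem_orbit_iff card_gimg)
  then show ?thesis
    using alpha_in_Hinv[OF assms] alpha_outside_orbit[OF assms]
    by (auto simp: Hdeg_def Hinv_def)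
qed

lemma Dclasses_rep:
  assumes "\<forall>D \<in> Dclasses n. rep D \<in> D" "D \<in> Dclasses n"
  shows "rep D \<subseteq> Kn n" "invariant_graph n (rep D)" "D = orbit n (rep D)"
  using Dclasses_memD[OF assms(2), of "rep D"] assms by blast+

lemma alpha_rep_rep:
  assumes rep: "\<forall>D \<in> Dclasses n. rep D \<in> D" and D: "D \<in> Dclasses n" "D' \<in> Dclasses n"
  shows "alpha n (rep D) (rep D') = (if D = D' then 1 else 0)"
proof (cases "D = D'")
  case True
  have "rep D \<subseteq> Kn n" "invariant_graph n (rep D)"
    using Dclasses_rep[OF rep D(1)] by simp_all
  then have "alpha n (rep D) (gimg id (rep D)) = act_sign id (rep D)"
    using perms_id by (rule alpha_gimg)
  with True \<open>rep D \<subseteq> Kn n\<close> show ?thesis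
    by (simp add: gimg_id act_sign_id)
next
  case False
  have "rep D' \<notin> D"
    using False rep D Dclasses_memD(3) by metis
  then show ?thesis
    using False rep D(1) Dclasses_memD(1,3) by (metis alpha_outside_orbit)
qed

lemma Hinv_times_alpha_rep:
  assumes rep: "\<forall>D \<in> Dclasses n. rep D \<in> D" and D: "D \<in> Dclasses n" and c: "c \<in> Hinv n"
  shows "c (rep D) * alpha n (rep D) \<Gamma> = (if \<Gamma> \<in> D then c \<Gamma> else 0)"
proof -
  note rep_D = Dclasses_rep[OF rep D]
  show ?thesis
  proof (cases "\<Gamma> \<in> D")
    case True
    with rep_D(3) have "\<Gamma> \<in> orbit n (rep D)"
      by simp
    then obtain \<sigma> where "\<sigma> \<in> perms n" "\<Gamma> = gimg \<sigma> (rep D)"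
      by (auto simp: mem_orbit_iff)
    with True rep_D(1,2) show ?thesis
      by (simp add: alpha_gimg Hinv_gimg[OF c])
  next
    case False
    with rep_D(1,3) show ?thesis
      by (simp add: alpha_outside_orbit)
  qed
qed

lemma Hinv_eq_sum_alpha_rep:
  assumes rep: "\<forall>D \<in> Dclasses n. rep D \<in> D" and c: "c \<in> Hinv n"
  shows "c = (\<lambda>\<Gamma>. \<Sum>D \<in> Dclasses n. c (rep D) * alpha n (rep D) \<Gamma>)"
proof
  fix \<Gamma>
  have "(\<Sum>D \<in> Dclasses n. c (rep D) * alpha n (rep D) \<Gamma>) = (\<Sum>D \<in> Dclasses n. if \<Gamma> \<in> D then c \<Gamma> else 0)"
    using Hinv_times_alpha_rep[OF rep _ c] by simp
  also have "\<dots> = (\<Sum>D \<in> {D \<in> Dclasses n. \<Gamma> \<in> D}. c \<Gamma>)"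
    by (rule sum.inter_filter[symmetric]) (rule finite_Dclasses)
  also have "\<dots> = c \<Gamma>"
    unfolding Dclasses_containing using Hinv_vanishes_outside_invariant_graphs[OF c, of \<Gamma>] by auto
  finally show "c \<Gamma> = (\<Sum>D \<in> Dclasses n. c (rep D) * alpha n (rep D) \<Gamma>)"
    by simp
qed

lemma alpha_rep_linear_independent:
  assumes rep: "\<forall>D \<in> Dclasses n. rep D \<in> D"
    and a: "\<forall>\<Gamma>. (\<Sum>D \<in> Dclasses n. a D * alpha n (rep D) \<Gamma>) = 0"
  shows "\<forall>D \<in> Dclasses n. a D = 0"
proof
  fix D' assume D': "D' \<in> Dclasses n"
  have "0 = (\<Sum>D \<in> Dclasses n. a D * alpha n (rep D) (rep D'))"
    using a by simp
  also have "\<dots> = (\<Sum>D \<in> Dclasses n. if D = D' then a D else 0)"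
    using alpha_rep_rep[OF rep _ D'] by (intro sum.cong) auto
  also have "\<dots> = a D'"
    using D' finite_Dclasses by simp
  finally show "a D' = 0"
    by simp
qed

theorem theorem2p8:
  fixes n :: nat and rep :: "(nat \<times> nat) set set \<Rightarrow> (nat \<times> nat) set"
  assumes "n \<ge> 1"
    and "\<forall>D \<in> Dclasses n. rep D \<in> D"
  shows "(\<forall>D \<in> Dclasses n. alpha n (rep D) \<in> Hinv n \<inter> Hdeg n (card (rep D)))
    \<and> (\<forall>a :: (nat \<times> nat) set set \<Rightarrow> rat.
          (\<forall>\<Gamma>. (\<Sum>D \<in> Dclasses n. a D * alpha n (rep D) \<Gamma>) = 0) \<longrightarrow> (\<forall>D \<in> Dclasses n. a D = 0))
    \<and> (\<forall>c \<in> Hinv n. \<exists>a :: (nat \<times> nat) set set \<Rightarrow> rat.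
          c = (\<lambda>\<Gamma>. \<Sum>D \<in> Dclasses n. a D * alpha n (rep D) \<Gamma>))"
proof -
  have "alpha n (rep D) \<in> Hinv n \<inter> Hdeg n (card (rep D))" if "D \<in> Dclasses n" for D
    using Dclasses_rep(1)[OF assms(2) that] by (simp add: alpha_in_Hinv alpha_in_Hdeg)
  moreover note alpha_rep_linear_independent[OF assms(2)]
  moreover have "\<exists>a. c = (\<lambda>\<Gamma>. \<Sum>D \<in> Dclasses n. a D * alpha n (rep D) \<Gamma>)" if "c \<in> Hinv n" for c
    using Hinv_eq_sum_alpha_rep[OF assms(2) that] by (rule exI[of _ "\<lambda>D. c (rep D)"])
  ultimately show ?thesis
    by blast
qed

end
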